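(* Let $h\in\mathcal H$ and $\varphi(\underline{x})=h(x_0,x_1)$ on $X=[0,1]^{\mathbb N_0}$. If $\mathrm{m}_h$ is totally disconnected, then the Aubry set $(\Omega_\varphi,d_X)$ is homeomorphic to the quotient Aubry set $(\bar\Omega_\varphi,\delta_\varphi)$.
   Context: $X=[0,1]^{\mathbb N_0}$ with metric $d_X(\underline{x},\underline{y})=\sum_{i\ge0}|x_i-y_i|/2^{i+1}$ and shift $\sigma(\underline{x})_i=x_{i+1}$. $\alpha_\varphi=\inf_\mu\int\varphi\,d\mu$ over $\sigma$-invariant Borel probability measures. $B(\underline{x},\underline{y},n;\varepsilon)=\{\underline{z}: d_X(\underline{x},\underline{z})<\varepsilon,\ d_X(\sigma^n\underline{z},\underline{y})<\varepsilon\}$. Mañé potential $S_\varphi(\underline{x},\underline{y})=\lim_{\varepsilon\to0}\inf\{\sum_{i=0}^{n-1}(\varphi(\sigma^i\underline{z})-\alpha_\varphi): n\in\mathbb N,\ \underline{z}\in B(\underline{x},\underline{y},n;\varepsilon)\}$; Peierls barrier $H_\varphi(\underline{x},\underline{y})=\lim_{\varepsilon\to0}\liminf_{n\to\infty}\inf\{\sum_{i=0}^{n-1}(\varphi(\sigma^i\underline{z})-\alpha_\varphi): \underline{z}\in B(\underline{x},\underline{y},n;\varepsilon)\}$; Aubry set $\Omega_\varphi=\{\underline{x}: S_\varphi(\underline{x},\underline{x})=0\}$. On $\Omega_\varphi$, $\delta_\varphi(\underline{x},\underline{y})=H_\varphi(\underline{x},\underline{y})+H_\varphi(\underline{y},\underline{x})$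 is a pseudo-metric; $\bar\Omega_\varphi$ is the quotient of $\Omega_\varphi$ by $\delta_\varphi=0$, with the induced metric (still denoted $\delta_\varphi$). $h^*=\min_x h(x,x)$, $\mathrm{m}_h=\{a: h(a,a)=h^*\}$. A finite sequence $(x_k,\dots,x_l)$ is minimal (for $h$) if $\sum_{i=k}^{l-1}h(x_i,x_{i+1})\le\sum_{i=k}^{l-1}h(y_i,y_{i+1})$ for every $(y_k,\dots,y_l)$ in $[0,1]$ with the same endpoints. $\mathcal H$ is the set of Lipschitz $h:[0,1]^2\to\mathbb R$ such that (H3) if $\xi_1<\xi_2$, $\eta_1<\eta_2$ then $h(\xi_1,\eta_1)+h(\xi_2,\eta_2)<h(\xi_1,\eta_2)+h(\xi_2,\eta_1)$; and (H4) if $(x_{-1},x_0,x_1)\ne(x'_{-1},x_0,x'_1)$ are both minimal then $(x_{-1}-x'_{-1})(x_1-x'_1)<0$. *)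

theory Defs
  imports "HOL-Probability.Probability"
begin

definition Xsp :: "(nat \<Rightarrow> real) set" where
  "Xsp = {x. \<forall>i. x i \<in> {0..1}}"

definition dX :: "(nat \<Rightarrow> real) \<Rightarrow> (nat \<Rightarrow> real) \<Rightarrow> real" where
  "dX x y = (\<Sum>i. \<bar>x i - y i\<bar> / 2 ^ (i + 1))"

definition shift :: "(nat \<Rightarrow> real) \<Rightarrow> (nat \<Rightarrow> real)" where
  "shift x = (\<lambda>i. x (Suc i))"

text \<open>Shift-invariant Borel probability measures on X (Borel sets of X, i.e. the
  trace of the product-topology Borel sigma-algebra, which is the topology of dX).\<close>
definition inv_prob_measures :: "(nat \<Rightarrow> real) measure set" where
  "inv_prob_measures = {M. prob_space M \<and> sets M = sets (restrict_space borel Xsp)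
       \<and> distr M M shift = M}"

definition alpha :: "((nat \<Rightarrow> real) \<Rightarrow> real) \<Rightarrow> real" where
  "alpha \<phi> = (INF M \<in> inv_prob_measures. integral\<^sup>L M \<phi>)"

definition Bset :: "(nat \<Rightarrow> real) \<Rightarrow> (nat \<Rightarrow> real) \<Rightarrow> nat \<Rightarrow> real \<Rightarrow> (nat \<Rightarrow> real) set" where
  "Bset x y n \<epsilon> = {z \<in> Xsp. dX x z < \<epsilon> \<and> dX ((shift ^^ n) z) y < \<epsilon>}"

definition birkhoff :: "((nat \<Rightarrow> real) \<Rightarrow> real) \<Rightarrow> nat \<Rightarrow> (nat \<Rightarrow> real) \<Rightarrow> real" where
  "birkhoff \<phi> n z = (\<Sum>i<n. \<phi> ((shift ^^ i) z) - alpha \<phi>)"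

definition mane :: "((nat \<Rightarrow> real) \<Rightarrow> real) \<Rightarrow> (nat \<Rightarrow> real) \<Rightarrow> (nat \<Rightarrow> real) \<Rightarrow> ereal" where
  "mane \<phi> x y = Lim (at_right 0)
     (\<lambda>\<epsilon>::real. INF p \<in> {(n, z). n \<ge> 1 \<and> z \<in> Bset x y n \<epsilon>}. ereal (birkhoff \<phi> (fst p) (snd p)))"

definition peierls :: "((nat \<Rightarrow> real) \<Rightarrow> real) \<Rightarrow> (nat \<Rightarrow> real) \<Rightarrow> (nat \<Rightarrow> real) \<Rightarrow> ereal" where
  "peierls \<phi> x y = Lim (at_right 0)
     (\<lambda>\<epsilon>::real. liminf (\<lambda>n. INF z \<in> Bset x y n \<epsilon>. ereal (birkhoff \<phi> n z)))"

definition aubry :: "((nat \<Rightarrow> real) \<Rightarrow> real) \<Rightarrow> (nat \<Rightarrow> real) set" where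
  "aubry \<phi> = {x \<in> Xsp. mane \<phi> x x = 0}"

definition delta :: "((nat \<Rightarrow> real) \<Rightarrow> real) \<Rightarrow> (nat \<Rightarrow> real) \<Rightarrow> (nat \<Rightarrow> real) \<Rightarrow> ereal" where
  "delta \<phi> x y = peierls \<phi> x y + peierls \<phi> y x"

definition qclass :: "((nat \<Rightarrow> real) \<Rightarrow> real) \<Rightarrow> (nat \<Rightarrow> real) \<Rightarrow> (nat \<Rightarrow> real) set" where
  "qclass \<phi> x = {y \<in> aubry \<phi>. delta \<phi> x y = 0}"

definition quot_aubry :: "((nat \<Rightarrow> real) \<Rightarrow> real) \<Rightarrow> (nat \<Rightarrow> real) set set" where
  "quot_aubry \<phi> = qclass \<phi> ` aubry \<phi>"

definition qdelta :: "((nat \<Rightarrow> real) \<Rightarrow> real) \<Rightarrow> (nat \<Rightarrow> real) set \<Rightarrow> (nat \<Rightarrow> real) set \<Rightarrow> ereal" where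
  "qdelta \<phi> A B = delta \<phi> (SOME a. a \<in> A) (SOME b. b \<in> B)"

definition homeomorphic_aubry :: "((nat \<Rightarrow> real) \<Rightarrow> real) \<Rightarrow> bool" where
  "homeomorphic_aubry \<phi> \<longleftrightarrow> (\<exists>f g.
     (\<forall>x \<in> aubry \<phi>. f x \<in> quot_aubry \<phi> \<and> g (f x) = x) \<and>
     (\<forall>A \<in> quot_aubry \<phi>. g A \<in> aubry \<phi> \<and> f (g A) = A) \<and>
     (\<forall>x \<in> aubry \<phi>. \<forall>\<epsilon>>0. \<exists>\<eta>>0. \<forall>y \<in> aubry \<phi>.
         dX x y < \<eta> \<longrightarrow> qdelta \<phi> (f x) (f y) < ereal \<epsilon>) \<and>
     (\<forall>A \<in> quot_aubry \<phi>. \<forall>\<epsilon>>0. \<exists>\<eta>>0. \<forall>B \<in> quot_aubry \<phi>.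
         qdelta \<phi> A B < ereal \<eta> \<longrightarrow> dX (g A) (g B) < \<epsilon>))"

definition cost :: "(real \<Rightarrow> real \<Rightarrow> real) \<Rightarrow> real list \<Rightarrow> real" where
  "cost h xs = (\<Sum>i < length xs - 1. h (xs ! i) (xs ! Suc i))"

definition minimal_seq :: "(real \<Rightarrow> real \<Rightarrow> real) \<Rightarrow> real list \<Rightarrow> bool" where
  "minimal_seq h xs \<longleftrightarrow> xs \<noteq> [] \<and> set xs \<subseteq> {0..1} \<and>
     (\<forall>ys. length ys = length xs \<and> set ys \<subseteq> {0..1} \<and> hd ys = hd xs \<and> last ys = last xs
        \<longrightarrow> cost h xs \<le> cost h ys)"

definition classH :: "(real \<Rightarrow> real \<Rightarrow> real) set" where
  "classH = {h.
     (\<exists>C. C-lipschitz_on ({0..1} \<times> {0..1}) (\<lambda>(a, b). h a b)) \<and>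
     (\<forall>\<xi>1 \<xi>2 \<eta>1 \<eta>2. \<xi>1 \<in> {0..1} \<and> \<xi>2 \<in> {0..1} \<and> \<eta>1 \<in> {0..1} \<and> \<eta>2 \<in> {0..1} \<and>
        \<xi>1 < \<xi>2 \<and> \<eta>1 < \<eta>2 \<longrightarrow> h \<xi>1 \<eta>1 + h \<xi>2 \<eta>2 < h \<xi>1 \<eta>2 + h \<xi>2 \<eta>1) \<and>
     (\<forall>a b c a' c'. minimal_seq h [a, b, c] \<and> minimal_seq h [a', b, c'] \<and>
        (a, b, c) \<noteq> (a', b, c') \<longrightarrow> (a - a') * (c - c') < 0)}"

definition hstar :: "(real \<Rightarrow> real \<Rightarrow> real) \<Rightarrow> real" where
  "hstar h = (INF x \<in> {0..1}. h x x)"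

definition mset_h :: "(real \<Rightarrow> real \<Rightarrow> real) \<Rightarrow> real set" where
  "mset_h h = {a \<in> {0..1}. h a a = hstar h}"

definition totally_disconnected :: "real set \<Rightarrow> bool" where
  "totally_disconnected S \<longleftrightarrow> (\<forall>T \<subseteq> S. connected T \<longrightarrow> (\<exists>a. T \<subseteq> {a}))"

end

theory Submission
  imports Defs
begin

(* The twist condition (H3) makes the cost of a cycle w_1 -> ... -> w_n -> w_1 at least the
  sum of the diagonal costs h w_i w_i: removing the largest point p of the cycle saves at least
  h p p.  Hence every orbit segment of length n has action at least n h* up to a boundary term,
  alpha_phi = h* (attained by the Dirac mass at a constant minimizer), and a point of the Aubry
  set must start in m_h.  Refining the argument, a cycle that passes on both sides of a point c
  outside m_h costs at least n h* + eta(c) with eta(c) > 0.  Since m_h is totally disconnected,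
  distinct points of [0,1] are separated by such gaps c.  So for non-constant x every orbit
  returning close to x crosses a gap, which forces the Aubry set to consist of the constant
  sequences at points of m_h; every delta-class is a singleton; delta(a, b) <= 2 L |a - b| by
  jumping straight from a to b; and delta(a, b) is bounded below uniformly once |a - b| >= e,
  since every loop a -> b -> a crosses a gap.  Thus x |-> {x} is a homeomorphism.  Only the
  Lipschitz bound and (H3) are used. *)

lemma totally_disconnected_gap:
  assumes "totally_disconnected S" "a < b"
  obtains c where "a < c" "c < b" "c \<notin> S"
proof -
  define l u where "l = (2 * a + b) / 3" and "u = (a + 2 * b) / 3"
  have "l < u" "a < l" "u < b" using \<open>a < b\<close> unfolding l_def u_def by auto
  have "\<not> {l..u} \<subseteq> S"
  proof
    assume "{l..u} \<subseteq> S"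
    then obtain p where "{l..u} \<subseteq> {p}"
      using assms(1) connected_Icc unfolding totally_disconnected_def by blast
    moreover have "l \<in> {l..u}" "u \<in> {l..u}" using \<open>l < u\<close> by auto
    ultimately show False using \<open>l < u\<close> by blast
  qed
  then obtain c where "c \<in> {l..u}" "c \<notin> S" by blast
  then show thesis using that[of c] \<open>a < l\<close> \<open>u < b\<close> by auto
qed

lemma Lim_at_right_antimono:
  fixes f :: "real \<Rightarrow> 'a::{complete_linorder, linorder_topology}"
  assumes antimono: "\<And>x y. a < x \<Longrightarrow> x \<le> y \<Longrightarrow> f y \<le> f x"
  shows "Lim (at_right a) f = (SUP x\<in>{a<..}. f x)"
proof (rule tendsto_Lim)
  show "(f \<longlongrightarrow> (SUP x\<in>{a<..}. f x)) (at_right a)"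
  proof (rule order_tendstoI)
    fix y assume "y < (SUP x\<in>{a<..}. f x)"
    then obtain x0 where x0: "a < x0" "y < f x0" unfolding less_SUP_iff by auto
    show "eventually (\<lambda>x. y < f x) (at_right a)"
      by (rule eventually_at_rightI[OF _ \<open>a < x0\<close>]) (use x0 antimono in \<open>fastforce intro: less_le_trans\<close>)
  next
    fix y assume "(SUP x\<in>{a<..}. f x) < y"
    then show "eventually (\<lambda>x. f x < y) (at_right a)"
      by (intro eventually_at_rightI[of a "a + 1"]) (auto intro: le_less_trans[OF SUP_upper])
  qed
qed simp

lemma liminf_INF_add_ge:
  fixes f g :: "nat \<Rightarrow> 'a \<Rightarrow> real"
  assumes K: "\<And>n m z w. n \<ge> 1 \<Longrightarrow> m \<ge> 1 \<Longrightarrow> z \<in> A n \<Longrightarrow> w \<in> B m \<Longrightarrow> K \<le> f n z + g m w"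
    and f_ge: "\<And>n z. z \<in> A n \<Longrightarrow> C \<le> f n z" and g_ge: "\<And>m w. w \<in> B m \<Longrightarrow> C \<le> g m w"
  shows "ereal K \<le> liminf (\<lambda>n. INF z\<in>A n. ereal (f n z)) + liminf (\<lambda>m. INF w\<in>B m. ereal (g m w))"
    (is "_ \<le> ?U + ?V")
proof -
  have "ereal C \<le> ?U" "ereal C \<le> ?V"
    by (intro Liminf_bounded always_eventually allI INF_greatest; simp add: f_ge g_ge)+
  show ?thesis
  proof (cases ?U)
    case PInf
    then show ?thesis using \<open>ereal C \<le> ?V\<close> by auto
  next
    case MInf
    then show ?thesis using \<open>ereal C \<le> ?U\<close> by auto
  next
    case (real r)
    have "K - r \<le> g m w" if "m \<ge> 1" "w \<in> B m" for m w
    proof -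
      have "ereal (K - g m w) \<le> ?U"
        by (intro Liminf_bounded eventually_sequentiallyI[of 1] INF_greatest)
          (use K that in \<open>fastforce\<close>)
      then show ?thesis using real by simp
    qed
    then have "ereal (K - r) \<le> ?V"
      by (intro Liminf_bounded eventually_sequentiallyI[of 1] INF_greatest) auto
    then show ?thesis using real by (metis add_left_mono diff_add_cancel plus_ereal.simps(1) add.commute)
  qed
qed

lemma ereal_le_if_minus_eps_le:
  fixes S :: ereal
  assumes "\<And>e. 0 < e \<Longrightarrow> ereal (a - e) \<le> S"
  shows "ereal a \<le> S"
proof (rule ereal_le_epsilon2)
  fix e :: real assume "0 < e"
  then have "ereal (a - e) + ereal e \<le> S + ereal e" using assms by (intro add_right_mono) auto
  then show "ereal a \<le> S + ereal e" by simp
qed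

lemma ereal_le_SUP_if_ge_minus_eps:
  fixes F :: "real \<Rightarrow> ereal"
  assumes "0 < K" "\<And>\<epsilon>. 0 < \<epsilon> \<Longrightarrow> ereal (c - K * \<epsilon>) \<le> F \<epsilon>"
  shows "ereal c \<le> (SUP \<epsilon>\<in>{0<..}. F \<epsilon>)"
proof (rule ereal_le_if_minus_eps_le)
  fix e :: real assume "0 < e"
  then have "ereal (c - K * (e / K)) \<le> F (e / K)" using assms by (intro assms(2)) simp
  also have "\<dots> \<le> (SUP \<epsilon>\<in>{0<..}. F \<epsilon>)" using \<open>0 < e\<close> assms(1) by (intro SUP_upper) simp
  finally show "ereal (c - e) \<le> (SUP \<epsilon>\<in>{0<..}. F \<epsilon>)" using assms(1) by simp
qed

lemma Xsp_coord: "z \<in> Xsp \<Longrightarrow> z i \<in> {0..1}"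
  unfolding Xsp_def by auto

lemma Xsp_const: "a \<in> {0..1} \<Longrightarrow> (\<lambda>_. a) \<in> Xsp"
  unfolding Xsp_def by auto

lemma funpow_shift: "(shift ^^ n) z = (\<lambda>k. z (k + n))"
  by (induction n arbitrary: z) (auto simp: shift_def funpow_swap1)

lemma Xsp_funpow_shift: "z \<in> Xsp \<Longrightarrow> (shift ^^ n) z \<in> Xsp"
  unfolding Xsp_def funpow_shift by auto

lemma const_div_two_pow_sums: "(\<lambda>i. C / 2 ^ (i + 1)) sums (C :: real)"
  using sums_mult[OF power_half_series, of C] by (simp add: power_divide)

lemma summable_dX:
  assumes "x \<in> Xsp" "y \<in> Xsp"
  shows "summable (\<lambda>i. \<bar>x i - y i\<bar> / 2 ^ (i + 1))"
proof (rule summable_comparison_test'[OF sums_summable[OF const_div_two_pow_sums[of 1]]])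
  fix i
  have "\<bar>x i - y i\<bar> \<le> 1"
    using Xsp_coord[OF assms(1), of i] Xsp_coord[OF assms(2), of i] by (auto simp: abs_le_iff)
  then show "norm (\<bar>x i - y i\<bar> / 2 ^ (i + 1)) \<le> 1 / 2 ^ (i + 1)"
    by (simp add: divide_right_mono)
qed

lemma coord_dist_le_dX:
  assumes "x \<in> Xsp" "y \<in> Xsp"
  shows "\<bar>x k - y k\<bar> \<le> 2 ^ (k + 1) * dX x y"
proof -
  have "(\<Sum>i\<in>{k}. \<bar>x i - y i\<bar> / 2 ^ (i + 1)) \<le> dX x y"
    unfolding dX_def by (rule sum_le_suminf[OF summable_dX[OF assms]]) auto
  then show ?thesis by (simp add: field_simps)
qed

lemma dX_const: "dX (\<lambda>_. a) (\<lambda>_. b) = \<bar>a - b\<bar>"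
  unfolding dX_def using const_div_two_pow_sums sums_unique by metis

lemma dX_const_switch: "dX (\<lambda>_. a) (\<lambda>i. if i < n then a else b) = \<bar>a - b\<bar> / 2 ^ n"
proof -
  let ?f = "\<lambda>i. \<bar>a - (if i < n then a else b)\<bar> / 2 ^ (i + 1)"
  have "(\<lambda>i. ?f (i + n)) sums (\<bar>a - b\<bar> / 2 ^ n)"
    using const_div_two_pow_sums[of "\<bar>a - b\<bar> / 2 ^ n"] by (simp add: power_add ac_simps)
  then have "?f sums (\<bar>a - b\<bar> / 2 ^ n + (\<Sum>i<n. ?f i))"
    by (rule sums_iff_shift[THEN iffD1])
  then show ?thesis unfolding dX_def by (simp add: sums_unique[symmetric])
qed

lemma shift_measurable: "shift \<in> restrict_space borel Xsp \<rightarrow>\<^sub>M restrict_space borel Xsp"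
proof (rule measurable_restrict_space2)
  show "shift \<in> space (restrict_space borel Xsp) \<rightarrow> Xsp"
    using Xsp_funpow_shift[of _ 1] by (auto simp: space_restrict_space)
  have "continuous_on UNIV (shift :: (nat \<Rightarrow> real) \<Rightarrow> _)"
    unfolding shift_def
    by (intro continuous_on_coordinatewise_then_product continuous_on_product_coordinates)
  then show "shift \<in> restrict_space borel Xsp \<rightarrow>\<^sub>M borel"
    by (intro measurable_restrict_space1 borel_measurable_continuous_onI)
qed

lemma integrable_funpow_invariant:
  fixes f :: "'a \<Rightarrow> 'b::{banach, second_countable_topology}"
  assumes "T \<in> M \<rightarrow>\<^sub>M M" "distr M M T = M" "integrable M f"
  shows "integrable M (\<lambda>x. f ((T ^^ i) x))"
proof (induction i)
  case (Suc i)
  then have "integrable M (\<lambda>x. f ((T ^^ i) (T x)))"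
    using integrable_distr[OF assms(1), of "\<lambda>x. f ((T ^^ i) x)"] assms(2) by simp
  then show ?case by (simp add: funpow_Suc_right del: funpow.simps)
qed (simp add: assms(3))

lemma integral_funpow_invariant:
  fixes f :: "'a \<Rightarrow> 'b::{banach, second_countable_topology}"
  assumes "T \<in> M \<rightarrow>\<^sub>M M" "distr M M T = M" "integrable M f"
  shows "integral\<^sup>L M (\<lambda>x. f ((T ^^ i) x)) = integral\<^sup>L M f"
proof (induction i)
  case (Suc i)
  have "integral\<^sup>L M (\<lambda>x. f ((T ^^ i) (T x))) = integral\<^sup>L (distr M M T) (\<lambda>x. f ((T ^^ i) x))"
    by (rule integral_distr[symmetric, OF assms(1)
          borel_measurable_integrable[OF integrable_funpow_invariant[OF assms]]])
  then show ?case using Suc assms(2) by (simp add: funpow_Suc_right del: funpow.simps)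
qed simp

lemma integral_ge_if_birkhoff_sums_ge:
  assumes "prob_space M" "T \<in> M \<rightarrow>\<^sub>M M" "distr M M T = M" "integrable M f"
    and sums_ge: "\<And>n x. n \<ge> 1 \<Longrightarrow> x \<in> space M \<Longrightarrow> real n * c - K \<le> (\<Sum>i<n. f ((T ^^ i) x))"
  shows "c \<le> integral\<^sup>L M f"
proof (rule ccontr)
  interpret prob_space M by fact
  assume "\<not> c \<le> integral\<^sup>L M f"
  then have gap: "0 < c - integral\<^sup>L M f" by simp
  obtain n :: nat where n: "max 0 (K / (c - integral\<^sup>L M f)) < real n"
    using reals_Archimedean2 by blast
  then have "n \<ge> 1" "K < real n * (c - integral\<^sup>L M f)"
    using gap by (auto simp: field_simps)
  have "real n * c - K = integral\<^sup>L M (\<lambda>_. real n * c - K)"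
    by (simp add: prob_space)
  also have "\<dots> \<le> integral\<^sup>L M (\<lambda>x. \<Sum>i<n. f ((T ^^ i) x))"
    using integrable_funpow_invariant[OF assms(2-4)] sums_ge[OF \<open>n \<ge> 1\<close>]
    by (intro integral_mono) auto
  also have "\<dots> = real n * integral\<^sup>L M f"
    using integrable_funpow_invariant[OF assms(2-4)] integral_funpow_invariant[OF assms(2-4)]
    by simp
  finally show False using \<open>K < real n * (c - integral\<^sup>L M f)\<close> by (simp add: algebra_simps)
qed

definition mane_eps :: "((nat \<Rightarrow> real) \<Rightarrow> real) \<Rightarrow> (nat \<Rightarrow> real) \<Rightarrow> (nat \<Rightarrow> real) \<Rightarrow> real \<Rightarrow> ereal" where
  "mane_eps \<phi> x y \<epsilon> =
     (INF p \<in> {(n, z). n \<ge> 1 \<and> z \<in> Bset x y n \<epsilon>}. ereal (birkhoff \<phi> (fst p) (snd p)))"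

definition peierls_eps :: "((nat \<Rightarrow> real) \<Rightarrow> real) \<Rightarrow> (nat \<Rightarrow> real) \<Rightarrow> (nat \<Rightarrow> real) \<Rightarrow> real \<Rightarrow> ereal" where
  "peierls_eps \<phi> x y \<epsilon> = liminf (\<lambda>n. INF z \<in> Bset x y n \<epsilon>. ereal (birkhoff \<phi> n z))"

lemma Bset_mono: "\<epsilon> \<le> \<epsilon>' \<Longrightarrow> Bset x y n \<epsilon> \<subseteq> Bset x y n \<epsilon>'"
  unfolding Bset_def by auto

lemma mane_eq_SUP: "mane \<phi> x y = (SUP \<epsilon>\<in>{0<..}. mane_eps \<phi> x y \<epsilon>)"
  unfolding mane_def mane_eps_def[abs_def]
  by (rule Lim_at_right_antimono, rule INF_superset_mono) (use Bset_mono in fastforce)+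

lemma peierls_eq_SUP: "peierls \<phi> x y = (SUP \<epsilon>\<in>{0<..}. peierls_eps \<phi> x y \<epsilon>)"
  unfolding peierls_def peierls_eps_def[abs_def]
  by (rule Lim_at_right_antimono)
    (intro Liminf_mono always_eventually allI INF_superset_mono Bset_mono order_refl)

lemma mane_eps_le_mane: "0 < \<epsilon> \<Longrightarrow> mane_eps \<phi> x y \<epsilon> \<le> mane \<phi> x y"
  unfolding mane_eq_SUP by (rule SUP_upper) simp

lemma peierls_eps_le_peierls: "0 < \<epsilon> \<Longrightarrow> peierls_eps \<phi> x y \<epsilon> \<le> peierls \<phi> x y"
  unfolding peierls_eq_SUP by (rule SUP_upper) simp

lemma BsetD:
  assumes "z \<in> Bset x y n \<epsilon>" "x \<in> Xsp" "y \<in> Xsp"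
  shows "z \<in> Xsp" "\<bar>x k - z k\<bar> < 2 ^ (k + 1) * \<epsilon>" "\<bar>z (k + n) - y k\<bar> < 2 ^ (k + 1) * \<epsilon>"
proof -
  show z: "z \<in> Xsp" using assms unfolding Bset_def by auto
  have "\<bar>x k - z k\<bar> \<le> 2 ^ (k + 1) * dX x z" by (rule coord_dist_le_dX[OF assms(2) z])
  also have "\<dots> < 2 ^ (k + 1) * \<epsilon>" using assms unfolding Bset_def by auto
  finally show "\<bar>x k - z k\<bar> < 2 ^ (k + 1) * \<epsilon>" .
  have "\<bar>(shift ^^ n) z k - y k\<bar> \<le> 2 ^ (k + 1) * dX ((shift ^^ n) z) y"
    by (rule coord_dist_le_dX[OF Xsp_funpow_shift[OF z] assms(3)])
  also have "\<dots> < 2 ^ (k + 1) * \<epsilon>" using assms unfolding Bset_def by auto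
  finally show "\<bar>z (k + n) - y k\<bar> < 2 ^ (k + 1) * \<epsilon>" by (simp add: funpow_shift)
qed

lemma Bset_self_crossing:
  assumes "z \<in> Bset x x n \<epsilon>" "n \<ge> 1" "x \<in> Xsp" "\<forall>j<k. x j = x 0"
    and between: "x 0 < c \<and> c < x k \<or> x k < c \<and> c < x 0"
    and small: "2 ^ (k + 3) * \<epsilon> \<le> min \<bar>c - x 0\<bar> \<bar>c - x k\<bar>"
  shows "k < n" "z 0 \<le> c \<and> c \<le> z k \<or> z k \<le> c \<and> c \<le> z 0"
proof -
  define d where "d = min \<bar>c - x 0\<bar> \<bar>c - x k\<bar>"
  have d: "0 < d" "d \<le> \<bar>c - x 0\<bar>" "d \<le> \<bar>c - x k\<bar>" "2 * d \<le> \<bar>x k - x 0\<bar>"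
    using between unfolding d_def by (auto simp: min_def abs_if)
  have "0 \<le> \<epsilon>" using BsetD(2)[OF assms(1,3,3), of 0] by auto
  have scale: "2 ^ (j + 1) * \<epsilon> \<le> d / 4" if "j \<le> k" for j
  proof -
    have "2 ^ (j + 1) * \<epsilon> \<le> 2 ^ (k + 1) * \<epsilon>"
      using that \<open>0 \<le> \<epsilon>\<close> by (intro mult_right_mono power_increasing) auto
    also have "\<dots> = 2 ^ (k + 3) * \<epsilon> / 4" by (simp add: power_add)
    also have "\<dots> \<le> d / 4" using small unfolding d_def by (rule divide_right_mono) simp
    finally show ?thesis .
  qed
  have "\<bar>x 0 - z 0\<bar> < d / 4" "\<bar>x k - z k\<bar> < d / 4"
    using BsetD(2)[OF assms(1,3,3), of 0] BsetD(2)[OF assms(1,3,3), of k] scale[of 0] scale[of k] by auto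
  then show "z 0 \<le> c \<and> c \<le> z k \<or> z k \<le> c \<and> c \<le> z 0"
    using between d by (auto simp: abs_if split: if_splits)
  show "k < n"
  proof (rule ccontr)
    assume "\<not> k < n"
    then have "k - n + n = k" "k - n < k" using assms(2) by auto
    then have "x (k - n) = x 0" using assms(4) by blast
    then have "\<bar>z k - x 0\<bar> < d / 4"
      using BsetD(3)[OF assms(1,3,3), of "k - n"] scale[of "k - n"] \<open>k - n + n = k\<close> by simp
    with \<open>\<bar>x k - z k\<bar> < d / 4\<close> d(1,4) show False by linarith
  qed
qed

lemma Bset_const_switch:
  assumes "a \<in> {0..1}" "b \<in> {0..1}" "\<bar>a - b\<bar> / 2 ^ n < \<epsilon>"
  shows "(\<lambda>i. if i < n then a else b) \<in> Bset (\<lambda>_. a) (\<lambda>_. b) n \<epsilon>"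
proof -
  have "0 \<le> \<bar>a - b\<bar> / 2 ^ n" by simp
  then have "0 < \<epsilon>" using assms(3) by linarith
  moreover have "(shift ^^ n) (\<lambda>i. if i < n then a else b) = (\<lambda>_. b)" by (simp add: funpow_shift)
  ultimately show ?thesis
    using assms dX_const_switch[of a n b] dX_const[of b b] unfolding Bset_def Xsp_def by auto
qed

lemma cost_singleton [simp]: "cost h [a] = 0"
  by (simp add: cost_def)

lemma cost_Cons_Cons [simp]: "cost h (a # b # xs) = h a b + cost h (b # xs)"
  unfolding cost_def by (simp add: sum.lessThan_Suc_shift del: sum.lessThan_Suc)

lemma cost_append: "cost h (xs @ y # ys) = cost h (xs @ [y]) + cost h (y # ys)"
  by (induction xs rule: induct_list012) auto

lemma cost_snoc: "xs \<noteq> [] \<Longrightarrow> cost h (xs @ [y]) = cost h xs + h (last xs) y"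
  by (induction xs rule: induct_list012) auto

lemma cost_map_upt: "cost h (map z [0..<Suc n]) = (\<Sum>i<n. h (z i) (z (Suc i)))"
  unfolding cost_def by (rule sum.cong) (simp_all del: upt_Suc)

definition cyclic_cost :: "(real \<Rightarrow> real \<Rightarrow> real) \<Rightarrow> real list \<Rightarrow> real" where
  "cyclic_cost h ws = cost h (ws @ [hd ws])"

lemma cyclic_cost_singleton [simp]: "cyclic_cost h [a] = h a a"
  by (simp add: cyclic_cost_def)

lemma cyclic_cost_append:
  "xs \<noteq> [] \<Longrightarrow> ys \<noteq> [] \<Longrightarrow> cyclic_cost h (xs @ ys) = cost h (xs @ [hd ys]) + cost h (ys @ [hd xs])"
  unfolding cyclic_cost_def using cost_append[of h xs "hd ys" "tl ys @ [hd xs]"] by (cases ys) auto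

lemma cyclic_cost_rotate:
  "xs \<noteq> [] \<Longrightarrow> ys \<noteq> [] \<Longrightarrow> cyclic_cost h (xs @ ys) = cyclic_cost h (ys @ xs)"
  by (simp add: cyclic_cost_append)

lemma cyclic_cost_snoc:
  "us \<noteq> [] \<Longrightarrow> cyclic_cost h (us @ [p]) = cyclic_cost h us + (h (last us) p + h p (hd us) - h (last us) (hd us))"
  using cost_append[of h us p "[hd us]"] by (simp add: cyclic_cost_def cost_snoc)

lemma cyclic_cost_rotate_to_last:
  assumes "p \<in> set ws"
  obtains us where "mset ws = mset (us @ [p])" "cyclic_cost h ws = cyclic_cost h (us @ [p])"
proof -
  obtain xs ys where ws: "ws = (xs @ [p]) @ ys" using split_list[OF assms] by auto
  show thesis
  proof (cases "ys = []")
    case False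
    then show thesis using that[of "ys @ xs"] cyclic_cost_rotate[of "xs @ [p]" ys h] by (simp add: ws)
  qed (use that ws in simp)
qed

lemma sum_chain_eq_cyclic_cost:
  assumes "n \<ge> 1"
  shows "(\<Sum>i<n. h (z i) (z (Suc i)))
    = cyclic_cost h (map z [0..<n]) - h (z (n - 1)) (z 0) + h (z (n - 1)) (z n)"
proof -
  obtain m where n: "n = Suc m" using assms by (cases n) auto
  have "cyclic_cost h (map z [0..<n]) = cost h (map z [0..<Suc m]) + h (z m) (z 0)"
    unfolding cyclic_cost_def n by (subst cost_snoc) (auto simp: last_map hd_map simp del: upt_Suc)
  then show ?thesis unfolding n by (simp add: cost_map_upt del: upt_Suc)
qed

definition glue :: "(nat \<Rightarrow> 'a) \<Rightarrow> nat \<Rightarrow> (nat \<Rightarrow> 'a) \<Rightarrow> nat \<Rightarrow> 'a" where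
  "glue z n w i = (if i < n then z i else w (i - n))"

lemma sum_chain_glue:
  fixes f :: "'a \<Rightarrow> 'a \<Rightarrow> 'b::ab_group_add"
  assumes "n \<ge> 1"
  shows "(\<Sum>i<n + m. f (glue z n w i) (glue z n w (Suc i)))
    = (\<Sum>i<n. f (z i) (z (Suc i))) - f (z (n - 1)) (z n) + f (z (n - 1)) (w 0)
      + (\<Sum>i<m. f (w i) (w (Suc i)))"
proof -
  have split: "(\<Sum>i<n + m. g i) = (\<Sum>i<n. g i) + (\<Sum>i<m. g (n + i))" for g :: "nat \<Rightarrow> 'b"
    by (induction m) (auto simp: add.assoc)
  have "(\<Sum>i<n. f (glue z n w i) (glue z n w (Suc i)))
      = (\<Sum>i<n. f (z i) (z (Suc i))) - f (z (n - 1)) (z n) + f (z (n - 1)) (w 0)"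
    using assms unfolding glue_def by (cases n) (simp_all add: sum.lessThan_Suc)
  moreover have "(\<Sum>i<m. f (glue z n w (n + i)) (glue z n w (Suc (n + i))))
      = (\<Sum>i<m. f (w i) (w (Suc i)))"
    by (simp add: glue_def)
  ultimately show ?thesis using split[of "\<lambda>i. f (glue z n w i) (glue z n w (Suc i))"] by simp
qed

lemma sum_list_map_mset_eq:
  fixes f :: "'a \<Rightarrow> 'b::comm_monoid_add"
  shows "mset xs = mset ys \<Longrightarrow> (\<Sum>x\<leftarrow>xs. f x) = (\<Sum>y\<leftarrow>ys. f y)"
  using sum_mset_sum_list[of "map f xs"] sum_mset_sum_list[of "map f ys"] by simp

lemma cyclic_cost_split_max:
  fixes ws :: "real list"
  assumes "length ws \<ge> 2"
  obtains us p where "mset ws = mset (us @ [p])" "us \<noteq> []" "\<forall>w\<in>set ws. w \<le> p"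
    "cyclic_cost h ws = cyclic_cost h us + (h (last us) p + h p (hd us) - h (last us) (hd us))"
proof -
  have "Max (set ws) \<in> set ws" using assms by (intro Max_in) auto
  then obtain us where us: "mset ws = mset (us @ [Max (set ws)])"
      "cyclic_cost h ws = cyclic_cost h (us @ [Max (set ws)])"
    by (rule cyclic_cost_rotate_to_last)
  moreover have "us \<noteq> []" using arg_cong[OF us(1), of size] assms by auto
  ultimately show thesis using that[of us "Max (set ws)"] cyclic_cost_snoc by simp
qed

locale twist_generator =
  fixes h :: "real \<Rightarrow> real \<Rightarrow> real" and L :: real
  assumes L_pos: "0 < L"
    and lipschitz: "L-lipschitz_on ({0..1} \<times> {0..1}) (\<lambda>(a, b). h a b)"
    and twist: "\<And>\<xi>1 \<xi>2 \<eta>1 \<eta>2. \<xi>1 \<in> {0..1} \<Longrightarrow> \<xi>2 \<in> {0..1} \<Longrightarrow> \<eta>1 \<in> {0..1} \<Longrightarrow> \<eta>2 \<in> {0..1}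
      \<Longrightarrow> \<xi>1 < \<xi>2 \<Longrightarrow> \<eta>1 < \<eta>2 \<Longrightarrow> h \<xi>1 \<eta>1 + h \<xi>2 \<eta>2 < h \<xi>1 \<eta>2 + h \<xi>2 \<eta>1"
begin

definition phi :: "(nat \<Rightarrow> real) \<Rightarrow> real" where
  "phi x = h (x 0) (x 1)"

lemma h_lipschitz:
  assumes "a \<in> {0..1}" "b \<in> {0..1}" "a' \<in> {0..1}" "b' \<in> {0..1}"
  shows "\<bar>h a b - h a' b'\<bar> \<le> L * (\<bar>a - a'\<bar> + \<bar>b - b'\<bar>)"
proof -
  have "\<bar>h a b - h a' b'\<bar> \<le> L * dist (a, b) (a', b')"
    using lipschitz_onD[OF lipschitz, of "(a, b)" "(a', b')"] assms by (simp add: dist_real_def)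
  also have "\<dots> \<le> L * (\<bar>a - a'\<bar> + \<bar>b - b'\<bar>)"
    using L_pos sqrt_sum_squares_le_sum_abs[of "a - a'" "b - b'"]
    by (intro mult_left_mono) (auto simp: dist_Pair_Pair dist_real_def)
  finally show ?thesis .
qed

lemma continuous_on_h_comp:
  assumes "continuous_on S f" "continuous_on S g" "\<And>t. t \<in> S \<Longrightarrow> f t \<in> {0..1} \<and> g t \<in> {0..1}"
  shows "continuous_on S (\<lambda>t. h (f t) (g t))"
proof -
  have "(\<lambda>t. (f t, g t)) ` S \<subseteq> {0..1} \<times> {0..1}" using assms(3) by auto
  from continuous_on_compose2[OF lipschitz_on_continuous_on[OF lipschitz]
      continuous_on_Pair[OF assms(1,2)] this]
  show ?thesis by simp
qed

lemma hstar_minimum: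
  obtains a where "a \<in> {0..1}" "h a a = hstar h" "\<And>b. b \<in> {0..1} \<Longrightarrow> hstar h \<le> h b b"
proof -
  have "continuous_on {0..1} (\<lambda>a. h a a)"
    by (rule continuous_on_h_comp) (auto intro: continuous_on_id)
  then obtain a where "a \<in> {0..1}" "\<forall>b\<in>{0..1}. h a a \<le> h b b"
    using continuous_attains_inf[OF compact_Icc _ \<open>continuous_on {0..1} _\<close>] by auto
  moreover from this have "hstar h = h a a"
    unfolding hstar_def by (intro cInf_eq_minimum) auto
  ultimately show thesis using that by simp
qed

lemma hstar_le: "a \<in> {0..1} \<Longrightarrow> hstar h \<le> h a a"
  by (metis hstar_minimum)

lemma twist_le:
  assumes "q \<in> {0..1}" "p \<in> {0..1}" "r \<in> {0..1}" "q \<le> p" "r \<le> p"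
  shows "h q r + h p p \<le> h q p + h p r"
  using twist[of q p r p] assms by (cases "q < p \<and> r < p") auto

lemma twist_less:
  assumes "q \<in> {0..1}" "p \<in> {0..1}" "r \<in> {0..1}" "q < p" "r < p"
  shows "h q r + h p p < h q p + h p r"
  using twist[of q p r p] assms by simp

lemma length_hstar_le_sum_diag:
  "set ws \<subseteq> {0..1} \<Longrightarrow> real (length ws) * hstar h \<le> (\<Sum>w\<leftarrow>ws. h w w)"
  using sum_list_mono[of ws "\<lambda>_. hstar h" "\<lambda>w. h w w"] hstar_le by (simp add: sum_list_triv subset_eq)

lemma sum_diag_le_cyclic_cost:
  "set ws \<subseteq> {0..1} \<Longrightarrow> ws \<noteq> [] \<Longrightarrow> (\<Sum>w\<leftarrow>ws. h w w) \<le> cyclic_cost h ws"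
proof (induction "length ws" arbitrary: ws rule: less_induct)
  case less
  show ?case
  proof (cases "length ws \<ge> 2")
    case False
    then have "length ws = 1" using less.prems(2) by (cases ws) (auto simp: Suc_le_eq)
    then show ?thesis by (auto simp: length_Suc_conv)
  next
    case True
    obtain us p where us: "mset ws = mset (us @ [p])" "us \<noteq> []" "\<forall>w\<in>set ws. w \<le> p"
      "cyclic_cost h ws = cyclic_cost h us + (h (last us) p + h p (hd us) - h (last us) (hd us))"
      by (rule cyclic_cost_split_max[where h = h, OF True])
    have set_ws: "set ws = insert p (set us)" and "length ws = Suc (length us)"
      using arg_cong[OF us(1), of set_mset] arg_cong[OF us(1), of size] by auto
    have "(\<Sum>w\<leftarrow>ws. h w w) = (\<Sum>w\<leftarrow>us. h w w) + h p p"
      using sum_list_map_mset_eq[OF us(1)] by simp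
    moreover have "set us \<subseteq> {0..1}" using less.prems(1) set_ws by blast
    then have "(\<Sum>w\<leftarrow>us. h w w) \<le> cyclic_cost h us"
      using less.hyps[of us] \<open>length ws = Suc (length us)\<close> \<open>us \<noteq> []\<close> by simp
    moreover have "h (last us) (hd us) + h p p \<le> h (last us) p + h p (hd us)"
      using less.prems set_ws us(3) last_in_set[OF \<open>us \<noteq> []\<close>] hd_in_set[OF \<open>us \<noteq> []\<close>]
      by (intro twist_le) (auto simp: subset_eq)
    ultimately show ?thesis using us(4) by simp
  qed
qed

lemma crossing_gain_pos:
  assumes "c \<in> {0..1}" "c \<notin> mset_h h"
  obtains \<eta> where "0 < \<eta>" "\<eta> \<le> h c c - hstar h"
    "\<And>q p r. q \<in> {0..c} \<Longrightarrow> p \<in> {c..1} \<Longrightarrow> r \<in> {0..c}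
       \<Longrightarrow> \<eta> \<le> (h q q - hstar h) + (h q p + h p r - h q r - hstar h)"
proof -
  define gain where "gain t = (h (fst t) (fst t) - hstar h)
      + (h (fst t) (fst (snd t)) + h (fst (snd t)) (snd (snd t)) - h (fst t) (snd (snd t)) - hstar h)"
    for t :: "real \<times> real \<times> real"
  define K where "K = {0..c} \<times> {c..1} \<times> {0..c}"
  have "compact K" unfolding K_def by (intro compact_Times compact_Icc)
  have "K \<noteq> {}" using assms(1) unfolding K_def by auto
  have K01: "fst t \<in> {0..1} \<and> fst (snd t) \<in> {0..1} \<and> snd (snd t) \<in> {0..1}" if "t \<in> K" for t
    using that assms(1) unfolding K_def by auto
  have "continuous_on K gain"
    unfolding gain_def by (intro continuous_intros continuous_on_h_comp) (auto dest: K01)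
  then obtain t0 where "t0 \<in> K" and t0_min: "\<And>t. t \<in> K \<Longrightarrow> gain t0 \<le> gain t"
    using continuous_attains_inf[OF \<open>compact K\<close> \<open>K \<noteq> {}\<close>] by blast
  obtain q p r where t0: "t0 = (q, p, r)" by (cases t0)
  have qpr: "q \<in> {0..c}" "p \<in> {c..1}" "r \<in> {0..c}" using \<open>t0 \<in> K\<close> unfolding t0 K_def by auto
  have "h c c \<noteq> hstar h" using assms unfolding mset_h_def by auto
  then have "hstar h < h c c" using hstar_le[OF assms(1)] by simp
  have q01: "q \<in> {0..1}" and p01: "p \<in> {0..1}" and r01: "r \<in> {0..1}" and "q \<le> p" "r \<le> p"
    using qpr assms(1) by auto
  have "hstar h < h q p + h p r - h q r"
  proof (cases "p = c")
    case True
    then show ?thesis using twist_le[OF q01 p01 r01 \<open>q \<le> p\<close> \<open>r \<le> p\<close>] \<open>hstar h < h c c\<close> by simp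
  next
    case False
    then have "q < p" "r < p" using qpr by auto
    then show ?thesis using twist_less[OF q01 p01 r01] hstar_le[OF p01] by simp
  qed
  then have "0 < gain t0" using hstar_le[OF \<open>q \<in> {0..1}\<close>] unfolding gain_def t0 by simp
  show thesis
  proof (rule that[of "min (gain t0) (h c c - hstar h)"])
    show "0 < min (gain t0) (h c c - hstar h)" using \<open>0 < gain t0\<close> \<open>hstar h < h c c\<close> by simp
    fix q' p' r' assume "q' \<in> {0..c}" "p' \<in> {c..1}" "r' \<in> {0..c}"
    then have "gain t0 \<le> gain (q', p', r')" by (intro t0_min) (auto simp: K_def)
    then show "min (gain t0) (h c c - hstar h)
        \<le> (h q' q' - hstar h) + (h q' p' + h p' r' - h q' r' - hstar h)"
      unfolding gain_def by simp
  qed simp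
qed


lemma diag_le_cyclic_cost:
  assumes "set ws \<subseteq> {0..1}" "w \<in> set ws"
  shows "real (length ws - 1) * hstar h + h w w \<le> cyclic_cost h ws"
proof -
  have "real (length ws - 1) * hstar h \<le> (\<Sum>v\<leftarrow>remove1 w ws. h v v)"
    using length_hstar_le_sum_diag[of "remove1 w ws"] assms set_remove1_subset[of w ws]
    by (simp add: length_remove1)
  also have "\<dots> + h w w = (\<Sum>v\<leftarrow>ws. h v v)"
    using sum_list_map_remove1[OF assms(2), of "\<lambda>v. h v v"] by simp
  also have "\<dots> \<le> cyclic_cost h ws"
    by (rule sum_diag_le_cyclic_cost) (use assms in auto)
  finally show ?thesis by simp
qed

lemma cyclic_cost_ge_crossing:
  assumes gain_c: "\<eta> \<le> h c c - hstar h"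
    and gain: "\<And>q p r. q \<in> {0..c} \<Longrightarrow> p \<in> {c..1} \<Longrightarrow> r \<in> {0..c}
      \<Longrightarrow> \<eta> \<le> (h q q - hstar h) + (h q p + h p r - h q r - hstar h)"
  shows "set ws \<subseteq> {0..1} \<Longrightarrow> \<exists>w\<in>set ws. w \<le> c \<Longrightarrow> \<exists>w\<in>set ws. c \<le> w
    \<Longrightarrow> real (length ws) * hstar h + \<eta> \<le> cyclic_cost h ws"
proof (induction "length ws" arbitrary: ws rule: less_induct)
  case less
  show ?case
  proof (cases "length ws \<ge> 2")
    case False
    then obtain a where "ws = [a]" using less.prems(2) by (cases ws) (auto simp: Suc_le_eq)
    then show ?thesis using less.prems gain_c by auto
  next
    case True
    obtain us p where us: "mset ws = mset (us @ [p])" "us \<noteq> []" "\<forall>w\<in>set ws. w \<le> p"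
      "cyclic_cost h ws = cyclic_cost h us + (h (last us) p + h p (hd us) - h (last us) (hd us))"
      by (rule cyclic_cost_split_max[where h = h, OF True])
    have set_ws: "set ws = insert p (set us)" and len: "length ws = Suc (length us)"
      using arg_cong[OF us(1), of set_mset] arg_cong[OF us(1), of size] by auto
    have "set us \<subseteq> {0..1}" "p \<in> {0..1}" "c \<le> p" using less.prems us(3) set_ws by auto
    have q: "last us \<in> set us" and r: "hd us \<in> set us" using \<open>us \<noteq> []\<close> by auto
    show ?thesis
    proof (cases "(\<exists>w\<in>set us. w \<le> c) \<and> (\<exists>w\<in>set us. c \<le> w)")
      case True
      then have "real (length us) * hstar h + \<eta> \<le> cyclic_cost h us"
        using less.hyps[of us] len \<open>set us \<subseteq> {0..1}\<close> by simp
      moreover have "h (last us) (hd us) + h p p \<le> h (last us) p + h p (hd us)"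
        using q r \<open>set us \<subseteq> {0..1}\<close> us(3) set_ws by (intro twist_le \<open>p \<in> {0..1}\<close>) auto
      ultimately show ?thesis using us(4) len hstar_le[OF \<open>p \<in> {0..1}\<close>] by (simp add: algebra_simps)
    next
      case False
      \<comment> \<open>Otherwise \<open>us\<close> lies entirely below \<open>c\<close>, and the removed maximum \<open>p \<ge> c\<close> carries the gain.\<close>
      have "\<not> (\<exists>w\<in>set us. c \<le> w)"
        using False less.prems(2) set_ws us(3) \<open>c \<le> p\<close> by (auto intro: order_trans)
      then have "last us \<in> {0..c}" "hd us \<in> {0..c}" using q r \<open>set us \<subseteq> {0..1}\<close> by force+
      then have "\<eta> \<le> (h (last us) (last us) - hstar h)
          + (h (last us) p + h p (hd us) - h (last us) (hd us) - hstar h)"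
        using \<open>p \<in> {0..1}\<close> \<open>c \<le> p\<close> by (intro gain) auto
      moreover have "real (length us - 1) * hstar h + h (last us) (last us) \<le> cyclic_cost h us"
        using diag_le_cyclic_cost[OF \<open>set us \<subseteq> {0..1}\<close> q] .
      moreover have "real (length ws) * hstar h = real (length us - 1) * hstar h + 2 * hstar h"
        using len \<open>us \<noteq> []\<close> by (cases us) (auto simp: algebra_simps)
      ultimately show ?thesis using us(4) by linarith
    qed
  qed
qed

lemma chain_sum_ge_cyclic_cost:
  assumes "n \<ge> 1" "\<forall>i\<le>n. z i \<in> {0..1}"
  shows "cyclic_cost h (map z [0..<n]) - L * \<bar>z n - z 0\<bar> \<le> (\<Sum>i<n. h (z i) (z (Suc i)))"
proof -
  have "z (n - 1) \<in> {0..1}" "z n \<in> {0..1}" "z 0 \<in> {0..1}" using assms(2) by auto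
  from h_lipschitz[OF this(1,2) this(1,3)]
  have "h (z (n - 1)) (z 0) - h (z (n - 1)) (z n) \<le> L * \<bar>z n - z 0\<bar>" by simp
  then show ?thesis using sum_chain_eq_cyclic_cost[OF assms(1), of h z] by simp
qed

lemma chain_excess_ge_diag:
  assumes "n \<ge> 1" "\<forall>i\<le>n. z i \<in> {0..1}"
  shows "h (z 0) (z 0) - hstar h - L * \<bar>z n - z 0\<bar> \<le> (\<Sum>i<n. h (z i) (z (Suc i)) - hstar h)"
proof -
  have "set (map z [0..<n]) \<subseteq> {0..1}" "z 0 \<in> set (map z [0..<n])" using assms by auto
  then have "real (length (map z [0..<n]) - 1) * hstar h + h (z 0) (z 0)
      \<le> cyclic_cost h (map z [0..<n])"
    by (rule diag_le_cyclic_cost)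
  then show ?thesis
    using chain_sum_ge_cyclic_cost[OF assms] assms(1) by (simp add: sum_subtractf of_nat_diff algebra_simps)
qed

lemma chain_excess_ge_crossing:
  assumes "c \<notin> mset_h h"
  obtains \<eta> where "0 < \<eta>"
    "\<And>(n::nat) z j k. \<forall>i\<le>n. z i \<in> {0..1} \<Longrightarrow> j < n \<Longrightarrow> k < n \<Longrightarrow> z j \<le> c \<Longrightarrow> c \<le> z k
      \<Longrightarrow> \<eta> - L * \<bar>z n - z 0\<bar> \<le> (\<Sum>i<n. h (z i) (z (Suc i)) - hstar h)"
proof (cases "c \<in> {0..1}")
  case True
  obtain \<eta> where "0 < \<eta>" and gain_c: "\<eta> \<le> h c c - hstar h" and gain:
    "\<And>q p r. q \<in> {0..c} \<Longrightarrow> p \<in> {c..1} \<Longrightarrow> r \<in> {0..c}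
       \<Longrightarrow> \<eta> \<le> (h q q - hstar h) + (h q p + h p r - h q r - hstar h)"
    using crossing_gain_pos[OF True assms] by blast
  show thesis
  proof (rule that[OF \<open>0 < \<eta>\<close>])
    fix n :: nat and z j k assume z: "\<forall>i\<le>n. z i \<in> {0..1}" and jk: "j < n" "k < n" "z j \<le> c" "c \<le> z k"
    have "set (map z [0..<n]) \<subseteq> {0..1}" using z by auto
    moreover have "z j \<in> set (map z [0..<n])" "z k \<in> set (map z [0..<n])" using jk(1,2) by auto
    then have "\<exists>w\<in>set (map z [0..<n]). w \<le> c" "\<exists>w\<in>set (map z [0..<n]). c \<le> w"
      using jk(3,4) by blast+
    ultimately have "real (length (map z [0..<n])) * hstar h + \<eta> \<le> cyclic_cost h (map z [0..<n])"
      using cyclic_cost_ge_crossing[OF gain_c gain] by blast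
    then show "\<eta> - L * \<bar>z n - z 0\<bar> \<le> (\<Sum>i<n. h (z i) (z (Suc i)) - hstar h)"
      using chain_sum_ge_cyclic_cost[of n z] z jk(1) by (simp add: sum_subtractf)
  qed
next
  case False
  show thesis
  proof (rule that[of 1])
    fix n :: nat and z j k assume "\<forall>i\<le>n. z i \<in> {0..1}" "j < n" "k < n" "z j \<le> c" "c \<le> z k"
    then have "z j \<in> {0..1}" "z k \<in> {0..1}" by auto
    then have "c \<in> {0..1}" using \<open>z j \<le> c\<close> \<open>c \<le> z k\<close> by auto
    with False show "1 - L * \<bar>z n - z 0\<bar> \<le> (\<Sum>i<n. h (z i) (z (Suc i)) - hstar h)" by blast
  qed simp
qed

lemma abs_h_le:
  assumes "a \<in> {0..1}" "b \<in> {0..1}"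
  shows "\<bar>h a b\<bar> \<le> \<bar>h 0 0\<bar> + 2 * L"
proof -
  have "L * (\<bar>a - 0\<bar> + \<bar>b - 0\<bar>) \<le> L * 2" using assms L_pos by (intro mult_left_mono) auto
  then show ?thesis using h_lipschitz[of a b 0 0] assms by simp
qed

lemma phi_measurable: "phi \<in> borel_measurable (restrict_space borel Xsp)"
proof (rule borel_measurable_continuous_on_restrict)
  show "continuous_on Xsp phi"
    unfolding phi_def[abs_def] by (rule continuous_on_h_comp)
      (auto intro!: continuous_on_product_then_coordinatewise continuous_on_id simp: Xsp_def)
qed

lemma hstar_le_integral_phi:
  assumes "M \<in> inv_prob_measures"
  shows "hstar h \<le> integral\<^sup>L M phi"
proof -
  have "prob_space M" and sets_M: "sets M = sets (restrict_space borel Xsp)"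
    and "distr M M shift = M"
    using assms unfolding inv_prob_measures_def by auto
  interpret prob_space M by fact
  have space_M: "space M = Xsp"
    using sets_eq_imp_space_eq[OF sets_M] by (simp add: space_restrict_space)
  have "shift \<in> M \<rightarrow>\<^sub>M M"
    using shift_measurable measurable_cong_sets[OF sets_M sets_M] by simp
  have "phi \<in> borel_measurable M"
    using phi_measurable measurable_cong_sets[OF sets_M refl, where 'b = real] by simp
  then have "integrable M phi"
    by (intro integrable_const_bound[where B = "\<bar>h 0 0\<bar> + 2 * L"] AE_I2)
      (auto simp: space_M Xsp_def phi_def intro!: abs_h_le)
  show ?thesis
  proof (rule integral_ge_if_birkhoff_sums_ge[where K = L, OF \<open>prob_space M\<close> \<open>shift \<in> M \<rightarrow>\<^sub>M M\<close>
        \<open>distr M M shift = M\<close> \<open>integrable M phi\<close>])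
    fix n :: nat and x assume "n \<ge> 1" "x \<in> space M"
    then have x: "\<forall>i. x i \<in> {0..1}" using space_M Xsp_coord by auto
    have "L * \<bar>x n - x 0\<bar> \<le> L * 1"
      using x[rule_format, of n] x[rule_format, of 0] L_pos by (intro mult_left_mono) auto
    then show "real n * hstar h - L \<le> (\<Sum>i<n. phi ((shift ^^ i) x))"
      using chain_excess_ge_diag[OF \<open>n \<ge> 1\<close>, of x] hstar_le[of "x 0"] x
      by (simp add: phi_def funpow_shift sum_subtractf)
  qed
qed

lemma alpha_phi: "alpha phi = hstar h"
proof -
  obtain a where a: "a \<in> {0..1}" "h a a = hstar h" using hstar_minimum by blast
  define N where "N = restrict_space borel Xsp"
  define M where "M = return N (\<lambda>_. a)"
  have a_N: "(\<lambda>_. a) \<in> space N" using Xsp_const[OF a(1)] by (simp add: N_def space_restrict_space)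
  have "distr M M shift = return M (shift (\<lambda>_. a))"
    unfolding M_def
    by (rule distr_return) (use shift_measurable a_N in \<open>auto simp: N_def cong: measurable_cong_sets\<close>)
  also have "shift (\<lambda>_. a) = (\<lambda>_. a)" by (simp add: shift_def)
  also have "return M (\<lambda>_. a) = M" unfolding M_def by (rule return_cong) simp
  finally have "M \<in> inv_prob_measures"
    unfolding inv_prob_measures_def using prob_space_return[OF a_N] by (simp add: M_def N_def)
  moreover have "integral\<^sup>L M phi = hstar h"
    unfolding M_def using a a_N phi_measurable by (simp add: N_def integral_return phi_def)
  ultimately show ?thesis
    unfolding alpha_def using hstar_le_integral_phi by (intro cInf_eq_minimum) force+
qed

lemma birkhoff_phi: "birkhoff phi n z = (\<Sum>i<n. h (z i) (z (Suc i)) - hstar h)"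
  unfolding birkhoff_def alpha_phi by (simp add: phi_def funpow_shift)

lemma birkhoff_ge_Bset:
  assumes "z \<in> Bset x y n \<epsilon>" "x \<in> Xsp" "y \<in> Xsp"
  shows "- L * (\<bar>x 0 - y 0\<bar> + 4 * \<epsilon>) \<le> birkhoff phi n z"
proof (cases "n = 0")
  case True
  have "0 \<le> \<epsilon>" using BsetD(2)[OF assms, of 0] by auto
  then show ?thesis using True L_pos by (simp add: birkhoff_phi)
next
  case False
  have z: "\<forall>i. z i \<in> {0..1}" using BsetD(1)[OF assms] Xsp_coord by auto
  have "\<bar>z n - z 0\<bar> \<le> \<bar>x 0 - y 0\<bar> + 4 * \<epsilon>"
    using BsetD(2)[OF assms, of 0] BsetD(3)[OF assms, of 0] by auto
  then have "L * \<bar>z n - z 0\<bar> \<le> L * (\<bar>x 0 - y 0\<bar> + 4 * \<epsilon>)" using L_pos by (intro mult_left_mono) auto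
  then show ?thesis
    using chain_excess_ge_diag[of n z] hstar_le[of "z 0"] z False by (simp add: birkhoff_phi)
qed

lemma mane_ge:
  assumes "x \<in> Xsp" "y \<in> Xsp"
  shows "ereal (- L * \<bar>x 0 - y 0\<bar>) \<le> mane phi x y"
  unfolding mane_eq_SUP
proof (rule ereal_le_SUP_if_ge_minus_eps[where K = "4 * L"])
  fix \<epsilon> :: real
  show "ereal (- L * \<bar>x 0 - y 0\<bar> - 4 * L * \<epsilon>) \<le> mane_eps phi x y \<epsilon>"
    unfolding mane_eps_def
    by (rule INF_greatest) (use birkhoff_ge_Bset[OF _ assms] in \<open>force simp: algebra_simps\<close>)
qed (use L_pos in simp)

lemma peierls_ge:
  assumes "x \<in> Xsp" "y \<in> Xsp"
  shows "ereal (- L * \<bar>x 0 - y 0\<bar>) \<le> peierls phi x y"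
  unfolding peierls_eq_SUP
proof (rule ereal_le_SUP_if_ge_minus_eps[where K = "4 * L"])
  fix \<epsilon> :: real
  show "ereal (- L * \<bar>x 0 - y 0\<bar> - 4 * L * \<epsilon>) \<le> peierls_eps phi x y \<epsilon>"
    unfolding peierls_eps_def
    by (intro Liminf_bounded always_eventually allI INF_greatest)
      (use birkhoff_ge_Bset[OF _ assms] in \<open>force simp: algebra_simps\<close>)
qed (use L_pos in simp)

lemma const_in_aubry:
  assumes "a \<in> mset_h h"
  shows "(\<lambda>_. a) \<in> aubry phi"
proof -
  have a: "a \<in> {0..1}" "h a a = hstar h" using assms unfolding mset_h_def by auto
  have "mane_eps phi (\<lambda>_. a) (\<lambda>_. a) \<epsilon> \<le> 0" if "0 < \<epsilon>" for \<epsilon>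
  proof -
    have "(1, \<lambda>_. a) \<in> {(n, z). n \<ge> 1 \<and> z \<in> Bset (\<lambda>_. a) (\<lambda>_. a) n \<epsilon>}"
      using Xsp_const[OF a(1)] dX_const[of a a] that by (simp add: Bset_def funpow_shift)
    then show ?thesis
      unfolding mane_eps_def using a(2) by (force simp: birkhoff_phi intro: INF_lower2)
  qed
  then have "mane phi (\<lambda>_. a) (\<lambda>_. a) \<le> 0" unfolding mane_eq_SUP by (intro SUP_least) auto
  moreover have "0 \<le> mane phi (\<lambda>_. a) (\<lambda>_. a)"
    using mane_ge[OF Xsp_const Xsp_const, OF a(1) a(1)] by (simp add: zero_ereal_def)
  ultimately show ?thesis unfolding aubry_def using Xsp_const[OF a(1)] by simp
qed

lemma aubry_coord0_in_mset:
  assumes "x \<in> aubry phi"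
  shows "x 0 \<in> mset_h h"
proof (rule ccontr)
  assume "x 0 \<notin> mset_h h"
  have x: "x \<in> Xsp" "mane phi x x = 0" using assms unfolding aubry_def by auto
  define \<kappa> where "\<kappa> = h (x 0) (x 0) - hstar h"
  have "0 < \<kappa>"
    using \<open>x 0 \<notin> mset_h h\<close> Xsp_coord[OF x(1)] hstar_le[of "x 0"] unfolding \<kappa>_def mset_h_def by force
  define \<epsilon> where "\<epsilon> = \<kappa> / (16 * L)"
  have "0 < \<epsilon>" using \<open>0 < \<kappa>\<close> L_pos unfolding \<epsilon>_def by simp
  have "\<kappa> - 8 * L * \<epsilon> \<le> birkhoff phi n z" if "n \<ge> 1" "z \<in> Bset x x n \<epsilon>" for n z
  proof -
    have z: "\<forall>i. z i \<in> {0..1}" using BsetD(1)[OF that(2) x(1) x(1)] Xsp_coord by auto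
    have z0: "\<bar>x 0 - z 0\<bar> < 2 * \<epsilon>" and zn: "\<bar>z n - x 0\<bar> < 2 * \<epsilon>"
      using BsetD(2,3)[OF that(2) x(1) x(1), of 0] by auto
    have "\<bar>h (x 0) (x 0) - h (z 0) (z 0)\<bar> \<le> L * (\<bar>x 0 - z 0\<bar> + \<bar>x 0 - z 0\<bar>)"
      using Xsp_coord[OF x(1)] z by (intro h_lipschitz) auto
    also have "\<dots> \<le> L * (4 * \<epsilon>)" using z0 L_pos by (intro mult_left_mono) auto
    finally have "h (x 0) (x 0) - L * (4 * \<epsilon>) \<le> h (z 0) (z 0)" by (simp add: abs_le_iff)
    moreover have "L * \<bar>z n - z 0\<bar> \<le> L * (4 * \<epsilon>)" using z0 zn L_pos by (intro mult_left_mono) auto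
    ultimately show ?thesis
      using chain_excess_ge_diag[of n z] that(1) z unfolding birkhoff_phi \<kappa>_def by auto
  qed
  then have "ereal (\<kappa> - 8 * L * \<epsilon>) \<le> mane_eps phi x x \<epsilon>"
    unfolding mane_eps_def by (intro INF_greatest) auto
  also have "\<dots> \<le> 0" using mane_eps_le_mane[OF \<open>0 < \<epsilon>\<close>, of phi x x] x(2) by simp
  finally show False using \<open>0 < \<kappa>\<close> L_pos unfolding \<epsilon>_def by (simp add: field_simps)
qed

lemma birkhoff_glued_le:
  assumes "n \<ge> 1" "z \<in> Bset x y n \<epsilon>" "w \<in> Bset y x m \<epsilon>" "x \<in> Xsp" "y \<in> Xsp"
  shows "(\<Sum>i<n + m. h (glue z n w i) (glue z n w (Suc i)) - hstar h) + L * \<bar>w m - z 0\<bar>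
    \<le> birkhoff phi n z + birkhoff phi m w + 8 * L * \<epsilon>"
proof -
  have "z \<in> Xsp" "w \<in> Xsp" using BsetD(1) assms(2-5) by blast+
  have "\<bar>z n - w 0\<bar> \<le> 4 * \<epsilon>" "\<bar>w m - z 0\<bar> \<le> 4 * \<epsilon>"
    using BsetD(2,3)[OF assms(2,4,5), of 0] BsetD(2,3)[OF assms(3,5,4), of 0] by auto
  then have "L * \<bar>z n - w 0\<bar> \<le> L * (4 * \<epsilon>)" "L * \<bar>w m - z 0\<bar> \<le> L * (4 * \<epsilon>)"
    using L_pos by (simp_all add: mult_left_mono)
  moreover have "h (z (n - 1)) (w 0) - h (z (n - 1)) (z n) \<le> L * \<bar>z n - w 0\<bar>"
    using h_lipschitz[of "z (n - 1)" "w 0" "z (n - 1)" "z n"] \<open>z \<in> Xsp\<close> \<open>w \<in> Xsp\<close> Xsp_coord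
    by (simp add: abs_le_iff abs_minus_commute)
  ultimately show ?thesis
    using sum_chain_glue[OF assms(1), where f = "\<lambda>u v. h u v - hstar h" and z = z and w = w and m = m]
    by (simp add: birkhoff_phi algebra_simps)
qed

lemma birkhoff_const_switch:
  assumes "n \<ge> 1" "a \<in> mset_h h"
  shows "birkhoff phi n (\<lambda>i. if i < n then a else b) = h a b - hstar h"
proof -
  obtain k where n: "n = Suc k" using assms(1) by (cases n) auto
  have "h a a = hstar h" using assms(2) unfolding mset_h_def by auto
  then show ?thesis unfolding birkhoff_phi n by simp
qed

lemma peierls_const_le:
  assumes "a \<in> mset_h h" "b \<in> {0..1}"
  shows "peierls phi (\<lambda>_. a) (\<lambda>_. b) \<le> ereal (L * \<bar>a - b\<bar>)"
  unfolding peierls_eq_SUP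
proof (rule SUP_least)
  fix \<epsilon> :: real assume "\<epsilon> \<in> {0<..}"
  have a: "a \<in> {0..1}" "h a a = hstar h" using assms(1) unfolding mset_h_def by auto
  have "h a b - hstar h \<le> L * \<bar>a - b\<bar>"
    using h_lipschitz[of a b a a] a assms(2) by (simp add: abs_le_iff abs_minus_commute)
  obtain N :: nat where N: "\<bar>a - b\<bar> / \<epsilon> < 2 ^ N"
    using real_arch_pow[of 2 "\<bar>a - b\<bar> / \<epsilon>"] by auto
  have "(INF z \<in> Bset (\<lambda>_. a) (\<lambda>_. b) n \<epsilon>. ereal (birkhoff phi n z)) \<le> ereal (L * \<bar>a - b\<bar>)"
    if "n \<ge> max N 1" for n
  proof -
    have "\<bar>a - b\<bar> < \<epsilon> * 2 ^ N" using N \<open>\<epsilon> \<in> {0<..}\<close> by (simp add: field_simps)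
    also have "\<dots> \<le> \<epsilon> * 2 ^ n"
      using that \<open>\<epsilon> \<in> {0<..}\<close> by (intro mult_left_mono power_increasing) auto
    finally have "\<bar>a - b\<bar> / 2 ^ n < \<epsilon>" by (simp add: field_simps)
    then have "(\<lambda>i. if i < n then a else b) \<in> Bset (\<lambda>_. a) (\<lambda>_. b) n \<epsilon>"
      by (rule Bset_const_switch[OF a(1) assms(2)])
    moreover have "birkhoff phi n (\<lambda>i. if i < n then a else b) = h a b - hstar h"
      using that assms(1) by (intro birkhoff_const_switch) auto
    ultimately show ?thesis
      using \<open>h a b - hstar h \<le> L * \<bar>a - b\<bar>\<close> by (metis INF_lower2 ereal_less_eq(3))
  qed
  then show "peierls_eps phi (\<lambda>_. a) (\<lambda>_. b) \<epsilon> \<le> ereal (L * \<bar>a - b\<bar>)"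
    unfolding peierls_eps_def
    by (intro Liminf_le) (auto simp: eventually_sequentially intro!: exI[of _ "max N 1"])
qed

lemma delta_const_self:
  assumes "a \<in> mset_h h"
  shows "delta phi (\<lambda>_. a) (\<lambda>_. a) = 0"
proof -
  have "a \<in> {0..1}" using assms unfolding mset_h_def by auto
  then have "peierls phi (\<lambda>_. a) (\<lambda>_. a) = 0"
    using peierls_const_le[OF assms, of a] peierls_ge[OF Xsp_const Xsp_const, of a a]
    by (simp add: zero_ereal_def)
  then show ?thesis unfolding delta_def by simp
qed

lemma delta_const_le:
  assumes "a \<in> mset_h h" "b \<in> mset_h h"
  shows "delta phi (\<lambda>_. a) (\<lambda>_. b) \<le> ereal (2 * L * \<bar>a - b\<bar>)"
proof -
  have "a \<in> {0..1}" "b \<in> {0..1}" using assms unfolding mset_h_def by auto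
  then have "delta phi (\<lambda>_. a) (\<lambda>_. b) \<le> ereal (L * \<bar>a - b\<bar>) + ereal (L * \<bar>b - a\<bar>)"
    unfolding delta_def by (intro add_mono peierls_const_le assms)
  then show ?thesis by (simp add: abs_minus_commute mult.assoc)
qed

lemma delta_ge_of_loop_bound:
  assumes "x \<in> Xsp" "y \<in> Xsp" "0 < \<epsilon>"
    and loop_bound: "\<And>n m z w. n \<ge> 1 \<Longrightarrow> m \<ge> 1 \<Longrightarrow> z \<in> Bset x y n \<epsilon> \<Longrightarrow> w \<in> Bset y x m \<epsilon>
      \<Longrightarrow> K \<le> birkhoff phi n z + birkhoff phi m w"
  shows "ereal K \<le> delta phi x y"
proof -
  have "ereal K \<le> peierls_eps phi x y \<epsilon> + peierls_eps phi y x \<epsilon>"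
    unfolding peierls_eps_def
  proof (rule liminf_INF_add_ge[where C = "- L * (\<bar>x 0 - y 0\<bar> + 4 * \<epsilon>)"])
    fix n z assume "z \<in> Bset x y n \<epsilon>"
    then show "- L * (\<bar>x 0 - y 0\<bar> + 4 * \<epsilon>) \<le> birkhoff phi n z"
      using birkhoff_ge_Bset[OF _ assms(1,2)] by simp
  next
    fix m w assume "w \<in> Bset y x m \<epsilon>"
    then show "- L * (\<bar>x 0 - y 0\<bar> + 4 * \<epsilon>) \<le> birkhoff phi m w"
      using birkhoff_ge_Bset[OF _ assms(2,1)] by (simp add: abs_minus_commute)
  qed (rule loop_bound)
  also have "\<dots> \<le> delta phi x y"
    unfolding delta_def by (intro add_mono peierls_eps_le_peierls assms(3))
  finally show ?thesis .
qed

lemma delta_const_ge_across: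
  assumes "c \<notin> mset_h h"
  obtains \<eta> where "0 < \<eta>"
    "\<And>a b. a \<in> mset_h h \<Longrightarrow> b \<in> mset_h h \<Longrightarrow> a < c \<Longrightarrow> c < b \<Longrightarrow> ereal \<eta> \<le> delta phi (\<lambda>_. a) (\<lambda>_. b)"
proof -
  obtain \<eta> where "0 < \<eta>" and crossing:
    "\<And>(n::nat) z j k. \<forall>i\<le>n. z i \<in> {0..1} \<Longrightarrow> j < n \<Longrightarrow> k < n \<Longrightarrow> z j \<le> c \<Longrightarrow> c \<le> z k
      \<Longrightarrow> \<eta> - L * \<bar>z n - z 0\<bar> \<le> (\<Sum>i<n. h (z i) (z (Suc i)) - hstar h)"
    using chain_excess_ge_crossing[OF assms] by blast
  have "ereal \<eta> \<le> delta phi (\<lambda>_. a) (\<lambda>_. b)"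
    if "a \<in> mset_h h" "b \<in> mset_h h" "a < c" "c < b" for a b
  proof (rule ereal_le_if_minus_eps_le)
    fix e :: real assume "0 < e"
    have "a \<in> {0..1}" "b \<in> {0..1}" using that unfolding mset_h_def by auto
    then have a: "(\<lambda>_. a) \<in> Xsp" and b: "(\<lambda>_. b) \<in> Xsp" by (simp_all add: Xsp_const)
    define \<epsilon> where "\<epsilon> = min ((c - a) / 4) (min ((b - c) / 4) (e / (8 * L)))"
    have "0 < \<epsilon>" using that \<open>0 < e\<close> L_pos unfolding \<epsilon>_def by simp
    have "\<epsilon> \<le> (c - a) / 4" "\<epsilon> \<le> (b - c) / 4" "\<epsilon> \<le> e / (8 * L)"
      unfolding \<epsilon>_def by (intro min.coboundedI1 min.coboundedI2 order_refl)+
    then have "8 * L * \<epsilon> \<le> e" using L_pos by (simp add: field_simps)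
    show "ereal (\<eta> - e) \<le> delta phi (\<lambda>_. a) (\<lambda>_. b)"
    proof (rule delta_ge_of_loop_bound[OF a b \<open>0 < \<epsilon>\<close>])
      fix n m z w
      assume nm: "n \<ge> 1" "m \<ge> 1" and zw: "z \<in> Bset (\<lambda>_. a) (\<lambda>_. b) n \<epsilon>" "w \<in> Bset (\<lambda>_. b) (\<lambda>_. a) m \<epsilon>"
      have "\<forall>i\<le>n + m. glue z n w i \<in> {0..1}"
        using BsetD(1)[OF zw(1) a b] BsetD(1)[OF zw(2) b a] Xsp_coord unfolding glue_def by auto
      moreover have "glue z n w 0 \<le> c" "c \<le> glue z n w n"
        using BsetD(2)[OF zw(1) a b, of 0] BsetD(2)[OF zw(2) b a, of 0] nm \<open>\<epsilon> \<le> (c - a) / 4\<close>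
          \<open>\<epsilon> \<le> (b - c) / 4\<close>
        unfolding glue_def by auto
      ultimately have "\<eta> - L * \<bar>glue z n w (n + m) - glue z n w 0\<bar>
          \<le> (\<Sum>i<n + m. h (glue z n w i) (glue z n w (Suc i)) - hstar h)"
        using nm by (intro crossing[of "n + m" "glue z n w" 0 n]) auto
      moreover have "glue z n w (n + m) = w m" "glue z n w 0 = z 0" using nm unfolding glue_def by auto
      ultimately show "\<eta> - e \<le> birkhoff phi n z + birkhoff phi m w"
        using birkhoff_glued_le[OF nm(1) zw a b] \<open>8 * L * \<epsilon> \<le> e\<close> by simp
    qed
  qed
  with \<open>0 < \<eta>\<close> show thesis using that by blast
qed

end

locale twist_generator_disconnected = twist_generator +
  assumes totally_disconnected: "totally_disconnected (mset_h h)"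
begin

lemma aubry_const:
  assumes "x \<in> aubry phi"
  shows "x = (\<lambda>_. x 0)"
proof (rule ccontr)
  assume "x \<noteq> (\<lambda>_. x 0)"
  then have "\<exists>k. x k \<noteq> x 0" by auto
  define k where "k = (LEAST k. x k \<noteq> x 0)"
  have "x k \<noteq> x 0" unfolding k_def by (rule LeastI_ex) fact
  have before: "\<forall>j<k. x j = x 0" unfolding k_def using not_less_Least by blast
  have x: "x \<in> Xsp" "mane phi x x = 0" using assms unfolding aubry_def by auto
  have "min (x 0) (x k) < max (x 0) (x k)" using \<open>x k \<noteq> x 0\<close> by (auto simp: min_def max_def)
  then obtain c where c: "min (x 0) (x k) < c" "c < max (x 0) (x k)" "c \<notin> mset_h h"
    by (rule totally_disconnected_gap[OF totally_disconnected])
  have between: "x 0 < c \<and> c < x k \<or> x k < c \<and> c < x 0"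
    using c(1,2) by (cases "x 0 \<le> x k") (simp_all add: min_def max_def)
  obtain \<eta> where "0 < \<eta>" and crossing:
    "\<And>(n::nat) z j k. \<forall>i\<le>n. z i \<in> {0..1} \<Longrightarrow> j < n \<Longrightarrow> k < n \<Longrightarrow> z j \<le> c \<Longrightarrow> c \<le> z k
      \<Longrightarrow> \<eta> - L * \<bar>z n - z 0\<bar> \<le> (\<Sum>i<n. h (z i) (z (Suc i)) - hstar h)"
    using chain_excess_ge_crossing[OF c(3)] by blast
  define \<epsilon> where "\<epsilon> = min (min \<bar>c - x 0\<bar> \<bar>c - x k\<bar> / 2 ^ (k + 3)) (\<eta> / (8 * L))"
  have "0 < \<epsilon>" using between \<open>0 < \<eta>\<close> L_pos unfolding \<epsilon>_def by auto
  have small: "2 ^ (k + 3) * \<epsilon> \<le> min \<bar>c - x 0\<bar> \<bar>c - x k\<bar>"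
    unfolding \<epsilon>_def by (simp add: min_def field_simps)
  have "4 * L * \<epsilon> \<le> 4 * L * (\<eta> / (8 * L))"
    unfolding \<epsilon>_def using L_pos by (intro mult_left_mono min.cobounded2) simp
  then have "4 * L * \<epsilon> \<le> \<eta> / 2" using L_pos by simp
  have "\<eta> / 2 \<le> birkhoff phi n z" if "n \<ge> 1" "z \<in> Bset x x n \<epsilon>" for n z
  proof -
    have "\<forall>i\<le>n. z i \<in> {0..1}" using BsetD(1)[OF that(2) x(1) x(1)] Xsp_coord by auto
    note Bset_self_crossing[OF that(2,1) x(1) before between small]
    then have "\<eta> - L * \<bar>z n - z 0\<bar> \<le> birkhoff phi n z"
      using crossing[OF \<open>\<forall>i\<le>n. z i \<in> {0..1}\<close>] \<open>n \<ge> 1\<close> unfolding birkhoff_phi by auto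
    moreover have "\<bar>z n - z 0\<bar> \<le> 4 * \<epsilon>" using BsetD(2,3)[OF that(2) x(1) x(1), of 0] by auto
    then have "L * \<bar>z n - z 0\<bar> \<le> 4 * L * \<epsilon>" using L_pos by (simp add: mult_left_mono mult.assoc)
    ultimately show ?thesis using \<open>4 * L * \<epsilon> \<le> \<eta> / 2\<close> by linarith
  qed
  then have "ereal (\<eta> / 2) \<le> mane_eps phi x x \<epsilon>"
    unfolding mane_eps_def by (intro INF_greatest) auto
  also have "\<dots> \<le> 0" using mane_eps_le_mane[OF \<open>0 < \<epsilon>\<close>, of phi x x] x(2) by simp
  finally show False using \<open>0 < \<eta>\<close> by simp
qed

lemma aubry_eq: "aubry phi = (\<lambda>a _. a) ` mset_h h"
  using aubry_const aubry_coord0_in_mset const_in_aubry by blast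

lemma delta_const_ge_sep:
  assumes "a \<in> mset_h h" "0 < \<epsilon>"
  obtains \<eta> where "0 < \<eta>"
    "\<And>b. b \<in> mset_h h \<Longrightarrow> \<epsilon> \<le> \<bar>a - b\<bar> \<Longrightarrow> ereal \<eta> \<le> delta phi (\<lambda>_. a) (\<lambda>_. b)"
proof -
  obtain c1 where c1: "a < c1" "c1 < a + \<epsilon>" "c1 \<notin> mset_h h"
    using totally_disconnected_gap[OF totally_disconnected, of a "a + \<epsilon>"] assms(2) by auto
  obtain c2 where c2: "a - \<epsilon> < c2" "c2 < a" "c2 \<notin> mset_h h"
    using totally_disconnected_gap[OF totally_disconnected, of "a - \<epsilon>" a] assms(2) by auto
  obtain \<eta>1 where "0 < \<eta>1" and above:
      "\<And>a' b. a' \<in> mset_h h \<Longrightarrow> b \<in> mset_h h \<Longrightarrow> a' < c1 \<Longrightarrow> c1 < b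
        \<Longrightarrow> ereal \<eta>1 \<le> delta phi (\<lambda>_. a') (\<lambda>_. b)"
    using delta_const_ge_across[OF c1(3)] by blast
  obtain \<eta>2 where "0 < \<eta>2" and below:
      "\<And>a' b. a' \<in> mset_h h \<Longrightarrow> b \<in> mset_h h \<Longrightarrow> a' < c2 \<Longrightarrow> c2 < b
        \<Longrightarrow> ereal \<eta>2 \<le> delta phi (\<lambda>_. a') (\<lambda>_. b)"
    using delta_const_ge_across[OF c2(3)] by blast
  show thesis
  proof (rule that[of "min \<eta>1 \<eta>2"])
    fix b assume b: "b \<in> mset_h h" "\<epsilon> \<le> \<bar>a - b\<bar>"
    then consider "a + \<epsilon> \<le> b" | "b \<le> a - \<epsilon>" by linarith
    then show "ereal (min \<eta>1 \<eta>2) \<le> delta phi (\<lambda>_. a) (\<lambda>_. b)"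
    proof cases
      case 1
      then have "ereal \<eta>1 \<le> delta phi (\<lambda>_. a) (\<lambda>_. b)" using above[OF assms(1) b(1)] c1 by simp
      then show ?thesis by (rule order_trans[rotated]) simp
    next
      case 2
      then have "ereal \<eta>2 \<le> delta phi (\<lambda>_. b) (\<lambda>_. a)" using below[OF b(1) assms(1)] c2 by simp
      moreover have "delta phi (\<lambda>_. b) (\<lambda>_. a) = delta phi (\<lambda>_. a) (\<lambda>_. b)"
        unfolding delta_def by (rule add.commute)
      ultimately show ?thesis by (metis min.cobounded2 ereal_less_eq(3) order_trans)
    qed
  qed (use \<open>0 < \<eta>1\<close> \<open>0 < \<eta>2\<close> in simp)
qed

lemma qclass_const:
  assumes "a \<in> mset_h h"
  shows "qclass phi (\<lambda>_. a) = {\<lambda>_. a}"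
proof
  show "{\<lambda>_. a} \<subseteq> qclass phi (\<lambda>_. a)"
    unfolding qclass_def using const_in_aubry[OF assms] delta_const_self[OF assms] by auto
  show "qclass phi (\<lambda>_. a) \<subseteq> {\<lambda>_. a}"
  proof
    fix y assume "y \<in> qclass phi (\<lambda>_. a)"
    then obtain b where b: "b \<in> mset_h h" "y = (\<lambda>_. b)" "delta phi (\<lambda>_. a) (\<lambda>_. b) = 0"
      unfolding qclass_def aubry_eq by auto
    have "a = b"
    proof (rule ccontr)
      assume "a \<noteq> b"
      then obtain \<eta> where "0 < \<eta>" and
        "\<And>b'. b' \<in> mset_h h \<Longrightarrow> \<bar>a - b\<bar> \<le> \<bar>a - b'\<bar> \<Longrightarrow> ereal \<eta> \<le> delta phi (\<lambda>_. a) (\<lambda>_. b')"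
        using delta_const_ge_sep[OF assms, of "\<bar>a - b\<bar>"] by auto
      then have "ereal \<eta> \<le> delta phi (\<lambda>_. a) (\<lambda>_. b)" using b(1) by blast
      with b(3) \<open>0 < \<eta>\<close> show False by (simp add: zero_ereal_def)
    qed
    then show "y \<in> {\<lambda>_. a}" using b by simp
  qed
qed

lemma quot_aubry_eq: "quot_aubry phi = (\<lambda>x. {x}) ` aubry phi"
  unfolding quot_aubry_def aubry_eq using qclass_const by (auto simp: image_image)

lemma delta_small_if_dX_small:
  assumes "x \<in> aubry phi" "0 < \<epsilon>"
  shows "\<exists>\<eta>>0. \<forall>y\<in>aubry phi. dX x y < \<eta> \<longrightarrow> delta phi x y < ereal \<epsilon>"
proof (intro exI[of _ "\<epsilon> / (2 * L)"] conjI ballI impI)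
  show "0 < \<epsilon> / (2 * L)" using assms(2) L_pos by simp
  fix y assume "y \<in> aubry phi" "dX x y < \<epsilon> / (2 * L)"
  moreover obtain a b where "a \<in> mset_h h" "b \<in> mset_h h" "x = (\<lambda>_. a)" "y = (\<lambda>_. b)"
    using assms(1) \<open>y \<in> aubry phi\<close> unfolding aubry_eq by auto
  ultimately have "2 * L * \<bar>a - b\<bar> < \<epsilon>" and "delta phi x y \<le> ereal (2 * L * \<bar>a - b\<bar>)"
    using L_pos delta_const_le by (auto simp: dX_const field_simps)
  then show "delta phi x y < ereal \<epsilon>" by (simp add: le_less_trans)
qed

lemma dX_small_if_delta_small:
  assumes "x \<in> aubry phi" "0 < \<epsilon>"
  shows "\<exists>\<eta>>0. \<forall>y\<in>aubry phi. delta phi x y < ereal \<eta> \<longrightarrow> dX x y < \<epsilon>"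
proof -
  obtain a where a: "a \<in> mset_h h" "x = (\<lambda>_. a)" using assms(1) unfolding aubry_eq by auto
  obtain \<eta> where "0 < \<eta>" and
    sep: "\<And>b. b \<in> mset_h h \<Longrightarrow> \<epsilon> \<le> \<bar>a - b\<bar> \<Longrightarrow> ereal \<eta> \<le> delta phi (\<lambda>_. a) (\<lambda>_. b)"
    using delta_const_ge_sep[OF a(1) assms(2)] by blast
  show ?thesis
  proof (intro exI[of _ \<eta>] conjI ballI impI)
    fix y assume "y \<in> aubry phi" "delta phi x y < ereal \<eta>"
    moreover obtain b where "b \<in> mset_h h" "y = (\<lambda>_. b)"
      using \<open>y \<in> aubry phi\<close> unfolding aubry_eq by auto
    ultimately show "dX x y < \<epsilon>" using sep a(2) by (force simp: dX_const not_le[symmetric])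
  qed fact
qed

end

lemma homeomorphic_aubry_if_singleton_classes:
  assumes "quot_aubry \<phi> = (\<lambda>x. {x}) ` aubry \<phi>"
    and "\<And>x \<epsilon>. x \<in> aubry \<phi> \<Longrightarrow> 0 < \<epsilon> \<Longrightarrow> \<exists>\<eta>>0. \<forall>y\<in>aubry \<phi>. dX x y < \<eta> \<longrightarrow> delta \<phi> x y < ereal \<epsilon>"
    and "\<And>x \<epsilon>. x \<in> aubry \<phi> \<Longrightarrow> 0 < \<epsilon> \<Longrightarrow> \<exists>\<eta>>0. \<forall>y\<in>aubry \<phi>. delta \<phi> x y < ereal \<eta> \<longrightarrow> dX x y < \<epsilon>"
  shows "homeomorphic_aubry \<phi>"
  unfolding homeomorphic_aubry_def
proof (intro exI[of _ "\<lambda>x. {x}"] exI[of _ "\<lambda>A. SOME a. a \<in> A"] conjI)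
  have qdelta: "qdelta \<phi> {x} {y} = delta \<phi> x y" for x y by (simp add: qdelta_def)
  show "\<forall>x\<in>aubry \<phi>. {x} \<in> quot_aubry \<phi> \<and> (SOME a. a \<in> {x}) = x"
    and "\<forall>A\<in>quot_aubry \<phi>. (SOME a. a \<in> A) \<in> aubry \<phi> \<and> {SOME a. a \<in> A} = A"
    unfolding assms(1) by auto
  show "\<forall>x\<in>aubry \<phi>. \<forall>\<epsilon>>0. \<exists>\<eta>>0. \<forall>y\<in>aubry \<phi>. dX x y < \<eta> \<longrightarrow> qdelta \<phi> {x} {y} < ereal \<epsilon>"
    using assms(2) unfolding qdelta by blast
  show "\<forall>A\<in>quot_aubry \<phi>. \<forall>\<epsilon>>0. \<exists>\<eta>>0. \<forall>B\<in>quot_aubry \<phi>.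
      qdelta \<phi> A B < ereal \<eta> \<longrightarrow> dX (SOME a. a \<in> A) (SOME a. a \<in> B) < \<epsilon>"
    using assms(3) unfolding assms(1) by (auto simp: qdelta)
qed

theorem proposition4p9:
  fixes h :: "real \<Rightarrow> real \<Rightarrow> real"
  assumes "h \<in> classH"
    and "totally_disconnected (mset_h h)"
  shows "homeomorphic_aubry (\<lambda>x. h (x 0) (x 1))"
proof -
  obtain C where C: "C-lipschitz_on ({0..1} \<times> {0..1}) (\<lambda>(a, b). h a b)"
    using assms(1) unfolding classH_def by blast
  interpret twist_generator_disconnected h "C + 1"
  proof
    show "0 < C + 1" using lipschitz_on_nonneg[OF C] by simp
    show "(C + 1)-lipschitz_on ({0..1} \<times> {0..1}) (\<lambda>(a, b). h a b)" by (rule lipschitz_on_le[OF C]) simp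
  qed (use assms in \<open>auto simp: classH_def\<close>)
  have "(\<lambda>x. h (x 0) (x 1)) = phi" by (simp add: fun_eq_iff phi_def)
  then show ?thesis
    using homeomorphic_aubry_if_singleton_classes[OF quot_aubry_eq delta_small_if_dX_small
        dX_small_if_delta_small] by simp
qed

end
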